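(* Consider the following perfect-information game between Learner, Reality and $N$ experts (Expert $1,\dots,$ Expert $N$). At each step $t=1,2,\dots$: each Expert $n$ ($n=1,\dots,N$) announces a prediction $\gamma_t^n\in[0,1]$, a number $\eta_t^n>0$, and a loss function $\lambda_t^n\in\mathcal{L}$ that is $\eta_t^n$-mixable; then Learner announces a prediction $\pi_t\in[0,1]$; then Reality announces an outcome $\omega_t\in\{0,1\}$. Learner has a strategy that guarantees that, for all $T\ge 1$ and all $n=1,\dots,N$, $$\sum_{t=1}^T \eta_t^n\bigl(\lambda_t^n(\pi_t,\omega_t)-\lambda_t^n(\gamma_t^n,\omega_t)\bigr)\le \ln N .$$
   Context: A loss function is a map $\lambda:[0,1]\times\{0,1\}\to[0,\infty]$ satisfying: (1) $\lambda(\gamma,0)$ and $\lambda(\gamma,1)$ are continuous in $\gamma\in[0,1]$ (with the standard topology on $[0,\infty]$); (2) there exists $\gamma\in[0,1]$ with $\lambda(\gamma,0)$ and $\lambda(\gamma,1)$ both finite; (3) there is no $\gamma\in[0,1]$ with $\lambda(\gamma,0)$ and $\lambda(\gamma,1)$ both infinite. The superprediction set of $\lambda$ is $\Sigma_\lambda=\{(x,y)\in[0,\infty)^2:\exists\gamma\in[0,1]\ \lambda(\gamma,0)\le x,\ \lambda(\gamma,1)\le y\}$. For $\eta>0$, $\lambda$ is $\eta$-mixable if the image of $\Sigma_\lambda$ under $(x,y)\mapsto(e^{-\eta x},e^{-\eta y})$ is convex; it is mixable if it is $\eta$-mixable for some $\eta>0$. $\lambda$ is proper (a proper scoring rule) if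 for all $\pi,\pi'\in[0,1]$: $\pi\lambda(\pi,1)+(1-\pi)\lambda(\pi,0)\le\pi\lambda(\pi',1)+(1-\pi)\lambda(\pi',0)$. $\mathcal{L}$ denotes the set of all loss functions that are both mixable and proper. *)

theory Defs
  imports "HOL-Analysis.Analysis" "HOL-Library.Extended_Nonnegative_Real"
begin

text \<open>Outcomes: False stands for 0, True stands for 1. Losses take values in [0,\<infinity>],
  rendered as ennreal (order topology = standard topology on [0,\<infinity>]).\<close>

type_synonym loss = "real \<Rightarrow> bool \<Rightarrow> ennreal"

definition is_loss :: "loss \<Rightarrow> bool" where
  "is_loss l \<longleftrightarrow>
     continuous_on {0..1} (\<lambda>g. l g False) \<and> continuous_on {0..1} (\<lambda>g. l g True) \<and>
     (\<exists>g\<in>{0..1}. l g False < \<infinity> \<and> l g True < \<infinity>) \<and>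
     \<not> (\<exists>g\<in>{0..1}. l g False = \<infinity> \<and> l g True = \<infinity>)"

definition superpred :: "loss \<Rightarrow> (real \<times> real) set" where
  "superpred l = {(x, y). 0 \<le> x \<and> 0 \<le> y \<and>
      (\<exists>g\<in>{0..1}. l g False \<le> ennreal x \<and> l g True \<le> ennreal y)}"

definition eta_mixable :: "real \<Rightarrow> loss \<Rightarrow> bool" where
  "eta_mixable eta l \<longleftrightarrow>
     convex ((\<lambda>(x, y). (exp (- eta * x), exp (- eta * y))) ` superpred l)"

definition mixable :: "loss \<Rightarrow> bool" where
  "mixable l \<longleftrightarrow> (\<exists>eta>0. eta_mixable eta l)"

definition proper :: "loss \<Rightarrow> bool" where
  "proper l \<longleftrightarrow> (\<forall>p\<in>{0..1}. \<forall>p'\<in>{0..1}.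
      ennreal p * l p True + ennreal (1 - p) * l p False
        \<le> ennreal p * l p' True + ennreal (1 - p) * l p' False)"

definition LL :: "loss set" where
  "LL = {l. is_loss l \<and> mixable l \<and> proper l}"

text \<open>An expert's move in one round: (prediction gamma, number eta, loss function).\<close>
type_synonym move = "real \<times> real \<times> loss"

text \<open>Learner's own past
  predictions are determined by the strategy and hence need not be part of the input.\<close>
type_synonym strategy = "((nat \<Rightarrow> move) \<times> bool) list \<Rightarrow> (nat \<Rightarrow> move) \<Rightarrow> real"

definition learner_pred :: "strategy \<Rightarrow> (nat \<Rightarrow> nat \<Rightarrow> move) \<Rightarrow> (nat \<Rightarrow> bool) \<Rightarrow> nat \<Rightarrow> real" where
  "learner_pred S E \<omega> t = S (map (\<lambda>s. (E s, \<omega> s)) [1..<t]) (E t)"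

end

theory Submission
  imports Defs
begin

text \<open>The learner runs the Aggregating Algorithm with expert-specific learning rates: expert \<open>n\<close>
  carries the weight \<open>\<Prod>\<^sub>t exp (-\<eta>\<^sub>t \<lambda>\<^sub>t(\<gamma>\<^sub>t, \<omega>\<^sub>t)) / exp (-\<eta>\<^sub>t \<lambda>\<^sub>t(\<pi>\<^sub>t, \<omega>\<^sub>t))\<close>, whose
  logarithm is exactly its regret term. For a proper \<open>\<eta>\<close>-mixable loss the factor \<open>K(\<omega>)\<close> by
  which a weight changes satisfies \<open>\<pi> K(1) + (1 - \<pi>) K(0) \<le> 1\<close> for every prediction \<open>\<pi>\<close>:
  mixing exponentiated losses stays in the exponentiated superprediction set, and by properness
  the resulting log-score is maximal at \<open>\<pi>\<close> itself, so its derivative there is nonpositive.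
  Summing over the experts, a connectedness argument on \<open>[0,1]\<close> yields a prediction after which
  the total weight does not increase whatever the outcome. So the total weight never exceeds its
  initial value \<open>N\<close>, and neither does any single weight.\<close>

definition exp_loss :: "real \<Rightarrow> ennreal \<Rightarrow> real" where
  "exp_loss c x = (if x = top then 0 else exp (- c * enn2real x))"

lemma exp_loss_nonneg: "exp_loss c x \<ge> 0"
  by (simp add: exp_loss_def)

lemma exp_loss_pos: "x \<noteq> top \<Longrightarrow> exp_loss c x > 0"
  by (simp add: exp_loss_def)

lemma exp_loss_top [simp]: "exp_loss c top = 0"
  by (simp add: exp_loss_def)

lemma exp_loss_eq_0_iff: "exp_loss c x = 0 \<longleftrightarrow> x = top"
  by (simp add: exp_loss_def)

lemma exp_loss_antimono:
  assumes "c > 0" "x \<le> y"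
  shows "exp_loss c y \<le> exp_loss c x"
  using assms by (cases "y = top") (auto simp: exp_loss_def top_unique less_top intro: enn2real_mono)

lemma isCont_exp_loss:
  assumes "c > 0"
  shows "isCont (exp_loss c) x"
proof (cases "x = top")
  case False
  have "((\<lambda>y. exp (- c * enn2real y)) \<longlongrightarrow> exp_loss c x) (at x)"
    using False by (auto intro!: tendsto_intros simp: exp_loss_def less_top)
  moreover have "eventually (\<lambda>y. y \<in> {..<top}) (at x)"
    using False by (intro eventually_at_in_open') (auto simp: top.not_eq_extremum)
  then have "eventually (\<lambda>y. exp (- c * enn2real y) = exp_loss c y) (at x)"
    by eventually_elim (simp add: exp_loss_def)
  ultimately show ?thesis
    unfolding isCont_def by (rule Lim_transform_eventually)
next
  case True
  have finite_near_top: "eventually (\<lambda>y. y \<noteq> top) (at (top::ennreal))"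
    by (simp add: eventually_at_filter)
  have "((\<lambda>y. ennreal (enn2real y)) \<longlongrightarrow> top) (at (top::ennreal))"
    by (rule Lim_transform_eventually[OF tendsto_ident_at])
       (rule eventually_mono[OF finite_near_top], simp add: less_top)
  then have "filterlim (\<lambda>y. - c * enn2real y) at_bot (at (top::ennreal))"
    using filterlim_tendsto_pos_mult_at_top[OF tendsto_const assms]
    by (simp add: ennreal_tendsto_top_eq_at_top filterlim_uminus_at_bot)
  then have "((\<lambda>y. exp (- c * enn2real y)) \<longlongrightarrow> 0) (at (top::ennreal))"
    by (rule filterlim_compose[OF exp_at_bot])
  then have "(exp_loss c \<longlongrightarrow> 0) (at (top::ennreal))"
    by (rule Lim_transform_eventually) (rule eventually_mono[OF finite_near_top], simp add: exp_loss_def)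
  with True show ?thesis
    by (simp add: isCont_def exp_loss_def)
qed

lemma continuous_on_exp_loss_comp:
  assumes "c > 0" "continuous_on S f"
  shows "continuous_on S (\<lambda>x. exp_loss c (f x))"
proof -
  have "continuous_on UNIV (exp_loss c)"
    using isCont_exp_loss[OF assms(1)] by (simp add: continuous_at_imp_continuous_on)
  then show ?thesis
    using assms(2) by (rule continuous_on_compose2) auto
qed

lemma proper_loss_finite_interior:
  assumes "is_loss l" "proper l" "0 < p" "p < 1"
  shows "l p True \<noteq> top" "l p False \<noteq> top"
proof -
  obtain g where g: "g \<in> {0..1}" "l g False < top" "l g True < top"
    using assms(1) unfolding is_loss_def by auto
  have "ennreal p * l p True + ennreal (1-p) * l p False
      \<le> ennreal p * l g True + ennreal (1-p) * l g False"
    using assms g unfolding proper_def by auto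
  also have "\<dots> < top"
    using g by (simp add: ennreal_mult_less_top)
  finally show "l p True \<noteq> top" "l p False \<noteq> top"
    using assms by (auto simp: ennreal_mult_less_top top.not_eq_extremum)
qed

lemma proper_loss_min_at_0:
  assumes "proper l" "g \<in> {0..1}"
  shows "l 0 False \<le> l g False"
  using assms unfolding proper_def by (metis atLeastAtMost_iff diff_zero ennreal_0 ennreal_1
      mult_1 mult_zero_left add_0 order_refl zero_le_one)

lemma proper_loss_min_at_1:
  assumes "proper l" "g \<in> {0..1}"
  shows "l 1 True \<le> l g True"
  using assms unfolding proper_def by (metis atLeastAtMost_iff diff_self ennreal_0 ennreal_1
      mult_1 mult_zero_left add_0_right order_refl zero_le_one)

lemma proper_loss_finite_at_endpoints:
  assumes "is_loss l" "proper l"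
  shows "l 0 False \<noteq> top" "l 1 True \<noteq> top"
proof -
  obtain g where g: "g \<in> {0..1}" "l g False < top" "l g True < top"
    using assms(1) unfolding is_loss_def by auto
  show "l 0 False \<noteq> top" "l 1 True \<noteq> top"
    using proper_loss_min_at_0[OF assms(2) g(1)] proper_loss_min_at_1[OF assms(2) g(1)] g
    by (auto simp: top_unique)
qed

lemma proper_expected_loss_le_superpred:
  assumes "proper l" "p \<in> {0..1}" "l p True \<noteq> top" "l p False \<noteq> top"
    and "(x, y) \<in> superpred l"
  shows "p * enn2real (l p True) + (1-p) * enn2real (l p False) \<le> p * y + (1-p) * x"
proof -
  obtain q where q: "q \<in> {0..1}" "l q False \<le> ennreal x" "l q True \<le> ennreal y" "x \<ge> 0" "y \<ge> 0"
    using assms(5) unfolding superpred_def by auto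
  have "ennreal (p * enn2real (l p True) + (1-p) * enn2real (l p False))
      = ennreal p * l p True + ennreal (1-p) * l p False"
    using assms(2-4) by (simp add: ennreal_mult ennreal_enn2real less_top)
  also have "\<dots> \<le> ennreal p * l q True + ennreal (1-p) * l q False"
    using assms(1,2) q(1) unfolding proper_def by auto
  also have "\<dots> \<le> ennreal p * ennreal y + ennreal (1-p) * ennreal x"
    using q by (intro add_mono mult_left_mono) auto
  also have "\<dots> = ennreal (p * y + (1-p) * x)"
    using assms(2) q by (simp add: ennreal_mult)
  finally show ?thesis
    using assms(2) q by (subst (asm) ennreal_le_iff) auto
qed

lemma proper_mixable_exp_loss_ratio_le_1:
  assumes L: "is_loss l" and P: "proper l" and M: "eta_mixable c l" and c: "c > 0"
    and p: "0 < p" "p < 1" and g: "g \<in> {0..1}" "l g True \<noteq> top" "l g False \<noteq> top"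
  shows "p * (exp_loss c (l g True) / exp_loss c (l p True))
       + (1-p) * (exp_loss c (l g False) / exp_loss c (l p False)) \<le> 1"
proof -
  note fin = proper_loss_finite_interior[OF L P p]
  define a0 a1 where "a0 = enn2real (l p False)" and "a1 = enn2real (l p True)"
  define u0 u1 g0 g1 where "u0 = exp_loss c (l p False)" and "u1 = exp_loss c (l p True)"
    and "g0 = exp_loss c (l g False)" and "g1 = exp_loss c (l g True)"
  have pos: "u0 > 0" "u1 > 0" "g0 > 0" "g1 > 0"
    using fin g(2,3) by (auto simp: u0_def u1_def g0_def g1_def exp_loss_pos)
  define K where "K = (\<lambda>(x, y). (exp (- c * x), exp (- c * y))) ` superpred l"
  have in_K: "(exp_loss c (l q False), exp_loss c (l q True)) \<in> K"
    if "q \<in> {0..1}" "l q False \<noteq> top" "l q True \<noteq> top" for q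
    using that unfolding K_def superpred_def
    by (intro image_eqI[of _ _ "(enn2real (l q False), enn2real (l q True))"])
       (auto simp: exp_loss_def less_top)
  txt \<open>The expected log-score of the mixture of \<open>p\<close> and \<open>g\<close> with weight \<open>e\<close>; the claim
    is \<open>f' 0 \<le> 0\<close>.\<close>
  define f where "f e = (1-p) * ln ((1-e)*u0 + e*g0) + p * ln ((1-e)*u1 + e*g1)" for e
  have f_max: "f e \<le> f 0" if e: "0 \<le> e" "e \<le> 1" for e
  proof -
    have "(u0, u1) \<in> K" "(g0, g1) \<in> K"
      using in_K[of p] in_K[of g] p fin g unfolding u0_def u1_def g0_def g1_def by auto
    then have "(1-e) *\<^sub>R (u0, u1) + e *\<^sub>R (g0, g1) \<in> K"
      using M e unfolding eta_mixable_def K_def[symmetric] by (intro convexD) auto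
    then obtain x y where xy: "(x, y) \<in> superpred l"
      and mix: "(1-e)*u0 + e*g0 = exp (- c * x)" "(1-e)*u1 + e*g1 = exp (- c * y)"
      unfolding K_def by auto
    have "f e = - c * (p * y + (1-p) * x)"
      unfolding f_def mix by (simp add: algebra_simps)
    also have "\<dots> \<le> - c * (p * a1 + (1-p) * a0)"
      using proper_expected_loss_le_superpred[OF P _ fin xy] p c unfolding a0_def a1_def by simp
    also have "\<dots> = f 0"
      using fin by (simp add: f_def u0_def u1_def a0_def a1_def exp_loss_def algebra_simps)
    finally show ?thesis .
  qed
  define D where "D = (1-p) * ((g0 - u0) / u0) + p * ((g1 - u1) / u1)"
  have "(f has_real_derivative D) (at 0)"
    unfolding f_def D_def using pos by (auto intro!: derivative_eq_intros simp: field_simps)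
  moreover have "\<not> (\<forall>h>0. h < d \<longrightarrow> f 0 < f (0 + h))" if "d > 0" for d
    using f_max[of "min (d/2) 1"] that by (auto intro!: exI[of _ "min (d/2) 1"])
  ultimately have "D \<le> 0"
    using DERIV_pos_inc_right[of f D 0] by (meson not_le)
  then show ?thesis
    using pos unfolding D_def u0_def u1_def g0_def g1_def by (simp add: field_simps)
qed

definition weight_factor :: "real \<Rightarrow> loss \<Rightarrow> real \<Rightarrow> real \<Rightarrow> bool \<Rightarrow> ennreal" where
  "weight_factor c l g p b = ennreal (exp_loss c (l g b)) / ennreal (exp_loss c (l p b))"

lemma weight_factor_finite:
  "l p b \<noteq> top \<Longrightarrow> weight_factor c l g p b = ennreal (exp_loss c (l g b) / exp_loss c (l p b))"
  unfolding weight_factor_def by (simp add: divide_ennreal exp_loss_nonneg exp_loss_pos)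

text \<open>At an endpoint \<open>g \<in> {0, 1}\<close> one of the losses of \<open>g\<close> may be infinite; the bound there
  follows from the interior by continuity, as \<open>exp_loss\<close> maps an infinite loss to \<open>0\<close>.\<close>

lemma weight_factor_mean_le_1:
  assumes L: "is_loss l" and P: "proper l" and M: "eta_mixable c l" and c: "c > 0"
    and p: "p \<in> {0..1}" and g: "g \<in> {0..1}"
  shows "ennreal p * weight_factor c l g p True + ennreal (1-p) * weight_factor c l g p False \<le> 1"
proof -
  consider "p = 0" | "p = 1" | "0 < p" "p < 1"
    using p by fastforce
  then show ?thesis
  proof cases
    case 1
    have "l 0 False \<noteq> top"
      using proper_loss_finite_at_endpoints[OF L P] by simp
    moreover have "exp_loss c (l g False) \<le> exp_loss c (l 0 False)"
      using exp_loss_antimono[OF c proper_loss_min_at_0[OF P g]] .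
    ultimately show ?thesis
      using 1 exp_loss_pos by (simp add: weight_factor_finite)
  next
    case 2
    have "l 1 True \<noteq> top"
      using proper_loss_finite_at_endpoints[OF L P] by simp
    moreover have "exp_loss c (l g True) \<le> exp_loss c (l 1 True)"
      using exp_loss_antimono[OF c proper_loss_min_at_1[OF P g]] .
    ultimately show ?thesis
      using 2 exp_loss_pos by (simp add: weight_factor_finite)
  next
    case 3
    note fin = proper_loss_finite_interior[OF L P 3]
    define h where "h x = p * (exp_loss c (l x True) / exp_loss c (l p True))
       + (1-p) * (exp_loss c (l x False) / exp_loss c (l p False))" for x
    have "continuous_on {0..1} (\<lambda>x. l x b)" for b
      using L unfolding is_loss_def by (cases b) auto
    then have "continuous_on (closure {0<..<1}) h"
      unfolding h_def using c fin
      by (auto intro!: continuous_intros continuous_on_exp_loss_comp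
          simp: exp_loss_eq_0_iff closure_greaterThanLessThan)
    moreover have "h x \<le> 1" if x: "x \<in> {0<..<1}" for x
      unfolding h_def using x proper_loss_finite_interior[OF L P, of x]
      by (intro proper_mixable_exp_loss_ratio_le_1[OF L P M c 3]) auto
    ultimately have "h g \<le> 1"
      using g continuous_le_on_closure[of "{0<..<1}" h g 1] by (simp add: closure_greaterThanLessThan)
    moreover have "ennreal p * weight_factor c l g p True + ennreal (1-p) * weight_factor c l g p False
        = ennreal (h g)"
      using 3 unfolding h_def weight_factor_finite[of l p True, OF fin(1)]
        weight_factor_finite[of l p False, OF fin(2)]
      by (simp add: ennreal_mult'[symmetric] ennreal_plus divide_nonneg_nonneg exp_loss_nonneg)
    ultimately show ?thesis
      by (simp add: ennreal_le_1)
  qed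
qed

definition admissible_moves :: "nat \<Rightarrow> (nat \<Rightarrow> move) \<Rightarrow> bool" where
  "admissible_moves N m \<longleftrightarrow> (\<forall>n\<in>{1..N}. fst (m n) \<in> {0..1} \<and> fst (snd (m n)) > 0 \<and>
     snd (snd (m n)) \<in> LL \<and> eta_mixable (fst (snd (m n))) (snd (snd (m n))))"

definition mixed_weight :: "nat \<Rightarrow> (nat \<Rightarrow> ennreal) \<Rightarrow> (nat \<Rightarrow> move) \<Rightarrow> real \<Rightarrow> bool \<Rightarrow> ennreal" where
  "mixed_weight N w m p b =
     (\<Sum>n\<in>{1..N}. w n * weight_factor (fst (snd (m n))) (snd (snd (m n))) (fst (m n)) p b)"

lemma mixed_weight_mean_le:
  assumes m: "admissible_moves N m" and p: "p \<in> {0..1}"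
  shows "ennreal p * mixed_weight N w m p True + ennreal (1-p) * mixed_weight N w m p False
    \<le> (\<Sum>n\<in>{1..N}. w n)"
proof -
  have "ennreal p * mixed_weight N w m p True + ennreal (1-p) * mixed_weight N w m p False
     = (\<Sum>n\<in>{1..N}. w n *
         (ennreal p * weight_factor (fst (snd (m n))) (snd (snd (m n))) (fst (m n)) p True
          + ennreal (1-p) * weight_factor (fst (snd (m n))) (snd (snd (m n))) (fst (m n)) p False))"
    unfolding mixed_weight_def
    by (simp add: sum_distrib_left sum.distrib distrib_left mult.assoc mult.left_commute)
  also have "\<dots> \<le> (\<Sum>n\<in>{1..N}. w n * 1)"
    using m p unfolding admissible_moves_def LL_def
    by (intro sum_mono mult_left_mono weight_factor_mean_le_1) auto
  finally show ?thesis
    by simp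
qed

lemma continuous_on_mixed_weight:
  assumes m: "admissible_moves N m" and w: "\<forall>n\<in>{1..N}. w n \<noteq> top"
  shows "continuous_on {0..1} (\<lambda>p. mixed_weight N w m p b)"
  unfolding mixed_weight_def weight_factor_def divide_ennreal_def
proof (intro continuous_on_sum)
  fix n assume n: "n \<in> {1..N}"
  let ?g = "fst (m n)" and ?c = "fst (snd (m n))" and ?l = "snd (snd (m n))"
  have "is_loss ?l" "?c > 0"
    using m n unfolding admissible_moves_def LL_def by auto
  then have "continuous_on {0..1} (\<lambda>p. exp_loss ?c (?l p b))"
    unfolding is_loss_def by (cases b) (auto intro: continuous_on_exp_loss_comp)
  then have "continuous_on {0..1} (\<lambda>p. inverse (ennreal (exp_loss ?c (?l p b))))"
    by (intro continuous_on_inverse_ennreal continuous_on_ennreal)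
  then show "continuous_on {0..1}
      (\<lambda>p. w n * (ennreal (exp_loss ?c (?l ?g b)) * inverse (ennreal (exp_loss ?c (?l p b)))))"
    using w n by (intro ennreal_continuous_on_cmult) (auto simp: less_top)
qed

lemma min_le_convex_comb_ennreal:
  fixes x y :: ennreal
  assumes "p \<in> {0..1}"
  shows "min x y \<le> ennreal p * x + ennreal (1-p) * y"
proof -
  have "ennreal p + ennreal (1-p) = 1"
    using assms by (simp add: ennreal_plus[symmetric] del: ennreal_plus)
  then have "min x y = ennreal p * min x y + ennreal (1-p) * min x y"
    by (metis distrib_right mult_1)
  also have "\<dots> \<le> ennreal p * x + ennreal (1-p) * y"
    by (intro add_mono mult_left_mono) auto
  finally show ?thesis .
qed

text \<open>For every \<open>p\<close> one of the two outcomes keeps the total weight from increasing, and the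
  outcome \<open>False\<close> (resp.\ \<open>True\<close>) does so at \<open>p = 0\<close> (resp.\ \<open>p = 1\<close>); as both sets of good
  predictions are closed, connectedness of \<open>[0,1]\<close> yields a prediction good for both.\<close>

lemma exists_prediction_mixed_weight_le:
  assumes m: "admissible_moves N m"
  shows "\<exists>p\<in>{0..1}. \<forall>b. mixed_weight N w m p b \<le> (\<Sum>n\<in>{1..N}. w n)"
proof (cases "(\<Sum>n\<in>{1..N}. w n) = top")
  case True
  show ?thesis
    unfolding True by auto
next
  case False
  let ?W = "\<Sum>n\<in>{1..N}. w n"
  define A where "A b = {0..1} \<inter> (\<lambda>p. mixed_weight N w m p b) -` {..?W}" for b
  have "\<forall>n\<in>{1..N}. w n \<noteq> top"
    using False by simp
  then have closed: "closed (A b)" for b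
    unfolding A_def
    by (intro continuous_closed_preimage continuous_on_mixed_weight[OF m] closed_atMost) auto
  have cover: "{0..1} \<subseteq> A False \<union> A True"
  proof
    fix p :: real assume p: "p \<in> {0..1}"
    have "min (mixed_weight N w m p True) (mixed_weight N w m p False) \<le> ?W"
      using min_le_convex_comb_ennreal[OF p] mixed_weight_mean_le[OF m p] by (rule order_trans)
    then show "p \<in> A False \<union> A True"
      using p unfolding A_def by (auto simp: min_le_iff_disj)
  qed
  have ends: "0 \<in> A False" "1 \<in> A True"
    using mixed_weight_mean_le[OF m, of 0] mixed_weight_mean_le[OF m, of 1] unfolding A_def by auto
  have "A False \<inter> A True \<noteq> {}"
  proof
    assume "A False \<inter> A True = {}"
    then have "A False \<inter> {0..1} = {} \<or> A True \<inter> {0..1} = {}"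
      using cover closed by (intro connected_closedD[OF connected_Icc]) auto
    then show False
      using ends by auto
  qed
  then obtain p where p: "p \<in> A False" "p \<in> A True"
    by auto
  show ?thesis
  proof (intro bexI[of _ p] allI)
    show "p \<in> {0..1}"
      using p unfolding A_def by auto
    show "mixed_weight N w m p b \<le> ?W" for b
      using p unfolding A_def by (cases b) auto
  qed
qed

lemma exp_loss_ratio_eq_exp:
  assumes "a \<noteq> top" "b \<noteq> top"
  shows "ennreal (exp_loss c b) / ennreal (exp_loss c a)
    = ennreal (exp (c * (enn2real a - enn2real b)))"
proof -
  have "exp (c * (enn2real a - enn2real b)) = exp (- c * enn2real b) / exp (- c * enn2real a)"
    by (simp add: exp_diff[symmetric] algebra_simps)
  then show ?thesis
    using assms by (simp add: exp_loss_def divide_ennreal)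
qed

text \<open>An infinite loss of the expert makes the bound trivial, and an infinite loss of the learner
  would make the product infinite.\<close>

lemma sum_scaled_loss_le_of_prod_exp_loss_ratio_le:
  fixes c :: "'a \<Rightarrow> real" and a b :: "'a \<Rightarrow> ennreal"
  assumes A: "finite A" and c: "\<forall>t\<in>A. c t > 0" and M: "M \<ge> 1"
    and bound: "(\<Prod>t\<in>A. ennreal (exp_loss (c t) (b t)) / ennreal (exp_loss (c t) (a t))) \<le> ennreal M"
  shows "(\<Sum>t\<in>A. ennreal (c t) * a t) \<le> (\<Sum>t\<in>A. ennreal (c t) * b t) + ennreal (ln M)"
proof (cases "\<exists>t\<in>A. b t = top")
  case True
  then have "(\<Sum>t\<in>A. ennreal (c t) * b t) = top"
    using A c by (fastforce simp: ennreal_mult_eq_top_iff)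
  then show ?thesis
    by simp
next
  case False
  have a_finite: "a t \<noteq> top" if t: "t \<in> A" for t
  proof
    assume "a t = top"
    then have "ennreal (exp_loss (c t) (b t)) / ennreal (exp_loss (c t) (a t)) = top"
      using t False exp_loss_pos[of "b t" "c t"] by (simp add: divide_ennreal_def ennreal_mult_top)
    moreover have "ennreal (exp_loss (c t) (b t)) / ennreal (exp_loss (c t) (a t)) \<noteq> 0"
      if "t \<in> A" for t
      using that False exp_loss_pos[of "b t" "c t"] by (simp add: divide_ennreal_def)
    ultimately have "(\<Prod>t\<in>A. ennreal (exp_loss (c t) (b t)) / ennreal (exp_loss (c t) (a t))) = top"
      using A t by (auto simp: ennreal_prod_eq_top)
    then show False
      using bound by (simp add: top_unique)
  qed
  define S where "S = (\<Sum>t\<in>A. c t * (enn2real (a t) - enn2real (b t)))"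
  have "(\<Prod>t\<in>A. ennreal (exp_loss (c t) (b t)) / ennreal (exp_loss (c t) (a t))) = ennreal (exp S)"
    using A False a_finite
    by (simp add: exp_loss_ratio_eq_exp prod_ennreal S_def exp_sum)
  then have "S \<le> ln M"
    using bound M by (simp add: ln_ge_iff ennreal_le_iff)
  then have "(\<Sum>t\<in>A. c t * enn2real (a t)) \<le> (\<Sum>t\<in>A. c t * enn2real (b t)) + ln M"
    by (simp add: S_def sum_subtractf right_diff_distrib)
  moreover have "(\<Sum>t\<in>A. ennreal (c t) * x t) = ennreal (\<Sum>t\<in>A. c t * enn2real (x t))"
    if "\<forall>t\<in>A. x t \<noteq> top" for x
  proof -
    have "(\<Sum>t\<in>A. ennreal (c t) * x t) = (\<Sum>t\<in>A. ennreal (c t * enn2real (x t)))"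
      using that c by (intro sum.cong refl) (subst ennreal_mult, auto simp: less_imp_le less_top)
    also have "\<dots> = ennreal (\<Sum>t\<in>A. c t * enn2real (x t))"
      using c by (intro sum_ennreal) (simp add: less_imp_le)
    finally show ?thesis .
  qed
  moreover have "0 \<le> (\<Sum>t\<in>A. c t * enn2real (b t))" "0 \<le> ln M"
    using c M by (auto intro!: sum_nonneg simp: less_imp_le)
  ultimately show ?thesis
    using False a_finite by (simp add: ennreal_plus[symmetric] ennreal_leI del: ennreal_plus)
qed

definition aa_prediction :: "nat \<Rightarrow> (nat \<Rightarrow> ennreal) \<Rightarrow> (nat \<Rightarrow> move) \<Rightarrow> real" where
  "aa_prediction N w m =
     (SOME p. p \<in> {0..1} \<and> (\<forall>b. mixed_weight N w m p b \<le> (\<Sum>n\<in>{1..N}. w n)))"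

lemma aa_prediction:
  assumes "admissible_moves N m"
  shows "aa_prediction N w m \<in> {0..1}"
    and "mixed_weight N w m (aa_prediction N w m) b \<le> (\<Sum>n\<in>{1..N}. w n)"
  using someI_ex[OF exists_prediction_mixed_weight_le[OF assms, of w, unfolded Bex_def]]
  unfolding aa_prediction_def by auto

definition aa_update :: "nat \<Rightarrow> (nat \<Rightarrow> ennreal) \<Rightarrow> (nat \<Rightarrow> move) \<Rightarrow> bool \<Rightarrow> nat \<Rightarrow> ennreal" where
  "aa_update N w m b n =
     w n * weight_factor (fst (snd (m n))) (snd (snd (m n))) (fst (m n)) (aa_prediction N w m) b"

definition aa_weights :: "nat \<Rightarrow> ((nat \<Rightarrow> move) \<times> bool) list \<Rightarrow> nat \<Rightarrow> ennreal" where
  "aa_weights N hs = foldl (\<lambda>w (m, b). aa_update N w m b) (\<lambda>_. 1) hs"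

definition aa_strategy :: "nat \<Rightarrow> strategy" where
  "aa_strategy N hs m = aa_prediction N (aa_weights N hs) m"

lemma sum_aa_update_le:
  "admissible_moves N m \<Longrightarrow> (\<Sum>n\<in>{1..N}. aa_update N w m b n) \<le> (\<Sum>n\<in>{1..N}. w n)"
  using aa_prediction(2)[of N m w b] by (simp add: aa_update_def mixed_weight_def)

lemma learner_pred_aa_strategy:
  "learner_pred (aa_strategy N) E \<omega> (Suc T) =
     aa_prediction N (aa_weights N (map (\<lambda>s. (E s, \<omega> s)) [1..<Suc T])) (E (Suc T))"
  by (simp add: learner_pred_def aa_strategy_def)

lemma aa_weights_history_Suc:
  "aa_weights N (map (\<lambda>s. (E s, \<omega> s)) [1..<Suc (Suc T)]) =
     aa_update N (aa_weights N (map (\<lambda>s. (E s, \<omega> s)) [1..<Suc T])) (E (Suc T)) (\<omega> (Suc T))"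
  by (simp add: aa_weights_def)

lemma aa_weights_history_eq_prod:
  "aa_weights N (map (\<lambda>s. (E s, \<omega> s)) [1..<Suc T]) n =
     (\<Prod>t=1..T. weight_factor (fst (snd (E t n))) (snd (snd (E t n))) (fst (E t n))
        (learner_pred (aa_strategy N) E \<omega> t) (\<omega> t))"
proof (induction T)
  case 0
  show ?case
    by (simp add: aa_weights_def)
next
  case (Suc T)
  then show ?case
    unfolding aa_weights_history_Suc aa_update_def
    by (simp add: prod.nat_ivl_Suc' learner_pred_aa_strategy del: upt_Suc)
qed

lemma sum_aa_weights_history_le:
  assumes "\<forall>t\<ge>1. admissible_moves N (E t)"
  shows "(\<Sum>n\<in>{1..N}. aa_weights N (map (\<lambda>s. (E s, \<omega> s)) [1..<Suc T]) n) \<le> of_nat N"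
proof (induction T)
  case 0
  show ?case
    by (simp add: aa_weights_def)
next
  case (Suc T)
  have "(\<Sum>n\<in>{1..N}. aa_weights N (map (\<lambda>s. (E s, \<omega> s)) [1..<Suc (Suc T)]) n)
      \<le> (\<Sum>n\<in>{1..N}. aa_weights N (map (\<lambda>s. (E s, \<omega> s)) [1..<Suc T]) n)"
    unfolding aa_weights_history_Suc using assms by (intro sum_aa_update_le) simp
  then show ?case
    using Suc.IH by (rule order_trans)
qed

lemma learner_pred_aa_strategy_in_unit:
  assumes "\<forall>t\<ge>1. admissible_moves N (E t)" and "t \<ge> 1"
  shows "learner_pred (aa_strategy N) E \<omega> t \<in> {0..1}"
proof -
  obtain T where "t = Suc T"
    using assms(2) Suc_le_D by auto
  then show ?thesis
    using assms(1) aa_prediction(1) by (simp add: learner_pred_aa_strategy)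
qed

lemma aa_strategy_regret_le_ln:
  assumes adm: "\<forall>t\<ge>1. admissible_moves N (E t)" and n: "n \<in> {1..N}"
  shows "(\<Sum>t=1..T. ennreal (fst (snd (E t n))) *
            snd (snd (E t n)) (learner_pred (aa_strategy N) E \<omega> t) (\<omega> t))
    \<le> (\<Sum>t=1..T. ennreal (fst (snd (E t n))) * snd (snd (E t n)) (fst (E t n)) (\<omega> t))
       + ennreal (ln (real N))"
proof -
  have "aa_weights N (map (\<lambda>s. (E s, \<omega> s)) [1..<Suc T]) n
      \<le> (\<Sum>n\<in>{1..N}. aa_weights N (map (\<lambda>s. (E s, \<omega> s)) [1..<Suc T]) n)"
    using n by (intro member_le_sum) auto
  also have "\<dots> \<le> ennreal (real N)"
    using sum_aa_weights_history_le[OF adm] by (simp add: ennreal_of_nat_eq_real_of_nat)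
  finally show ?thesis
    using adm n unfolding aa_weights_history_eq_prod weight_factor_def admissible_moves_def
    by (intro sum_scaled_loss_le_of_prod_exp_loss_ratio_le) auto
qed

theorem theorem2:
  fixes N :: nat
  shows "\<exists>S :: strategy. \<forall>(E :: nat \<Rightarrow> nat \<Rightarrow> move) (\<omega> :: nat \<Rightarrow> bool).
    (\<forall>t\<ge>1. \<forall>n\<in>{1..N}.
        fst (E t n) \<in> {0..1} \<and> fst (snd (E t n)) > 0 \<and>
        snd (snd (E t n)) \<in> LL \<and> eta_mixable (fst (snd (E t n))) (snd (snd (E t n))))
    \<longrightarrow> (\<forall>t\<ge>1. learner_pred S E \<omega> t \<in> {0..1}) \<and>
        (\<forall>T\<ge>1. \<forall>n\<in>{1..N}.
          (\<Sum>t=1..T. ennreal (fst (snd (E t n))) * snd (snd (E t n)) (learner_pred S E \<omega> t) (\<omega> t))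
          \<le> (\<Sum>t=1..T. ennreal (fst (snd (E t n))) * snd (snd (E t n)) (fst (E t n)) (\<omega> t))
             + ennreal (ln (real N)))"
proof (intro exI[of _ "aa_strategy N"] allI impI conjI ballI)
  fix E :: "nat \<Rightarrow> nat \<Rightarrow> move" and \<omega> :: "nat \<Rightarrow> bool"
  assume "\<forall>t\<ge>1. \<forall>n\<in>{1..N}.
        fst (E t n) \<in> {0..1} \<and> fst (snd (E t n)) > 0 \<and>
        snd (snd (E t n)) \<in> LL \<and> eta_mixable (fst (snd (E t n))) (snd (snd (E t n)))"
  then have adm: "\<forall>t\<ge>1. admissible_moves N (E t)"
    unfolding admissible_moves_def by blast
  show "learner_pred (aa_strategy N) E \<omega> t \<in> {0..1}" if "t \<ge> 1" for t
    using learner_pred_aa_strategy_in_unit[OF adm that] .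
  show "(\<Sum>t=1..T. ennreal (fst (snd (E t n))) *
            snd (snd (E t n)) (learner_pred (aa_strategy N) E \<omega> t) (\<omega> t))
    \<le> (\<Sum>t=1..T. ennreal (fst (snd (E t n))) * snd (snd (E t n)) (fst (E t n)) (\<omega> t))
       + ennreal (ln (real N))"
    if "T \<ge> 1" and "n \<in> {1..N}" for T n
    using aa_strategy_regret_le_ln[OF adm that(2)] .
qed

end
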